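(* For every integer $n\ge 2$, every integer $k\ge 0$ and every real $x$, $$W^{(k+2)}_{n}(x)=W^{(k)}_{n}(x)+(-2)^{n-1}(n+k+1)(n-2)!\,\sin^n(x)\,W^{(k+2)}_{n-1}(x).$$
   Context: For smooth functions $f_1,\dots,f_n$ of a real variable $x$, $\mathrm{Wr}\{f_1,\dots,f_n\}$ denotes the determinant of the $n\times n$ matrix with $(i,j)$ entry $f_j^{(i-1)}(x)$. For integers $k\ge0$ define $W^{(k)}_1(x):=\sin((k+1)x)$ and, for $n\ge 2$, $W^{(k)}_n(x):=\mathrm{Wr}\{\sin(x),\sin(2x),\dots,\sin((n-1)x),\sin((n+k)x)\}$. *)

theory Defs
  imports "HOL-Analysis.Derivative" "Jordan_Normal_Form.Determinant"
begin

definition Wr :: "(real \<Rightarrow> real) list \<Rightarrow> real \<Rightarrow> real" where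
  "Wr fs x = det (mat (length fs) (length fs) (\<lambda>(i, j). (deriv ^^ i) (fs ! j) x))"

definition W :: "nat \<Rightarrow> nat \<Rightarrow> real \<Rightarrow> real" where
  "W n k x = (if n = 1 then sin (real (k + 1) * x)
     else Wr (map (\<lambda>j. \<lambda>t. sin (real j * t)) [1..<n] @ [\<lambda>t. sin (real (n + k) * t)]) x)"

end

(* The last entries sin((n+k+2)t) and sin((n+k)t) differ by 2 sin t cos(mt) with
   m = n+k+1, so by linearity of the Wronskian in its last entry the difference of the two sides
   is twice the Wronskian of sin t, ..., sin((n-1)t), sin t cos(mt).  Since
   sin((j+1)t) = sin t U_j(cos t) for the Chebyshev polynomial U_j of degree j and leading
   coefficient 2^j, a triangular change of basis replaces sin((j+1)t) by sin t cos^j t.  The common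
   factor sin t then leaves the Wronskian as sin^n t times the Wronskian of 1, cos t, ...,
   cos^(n-2) t, cos(mt), which is the Wronskian of the derivatives -p sin t cos^(p-1) t and
   -m sin(mt).  Pulling out these scalars and undoing the Chebyshev change of basis gives
   W^(k+2)_(n-1). *)

theory Submission
  imports Defs
begin

section \<open>Smooth real functions\<close>

definition smooth :: "(real \<Rightarrow> real) \<Rightarrow> bool" where
  "smooth f \<longleftrightarrow> (\<forall>i x. (deriv ^^ i) f differentiable (at x))"

lemma smooth_higher_deriv:
  "smooth f \<Longrightarrow> ((deriv ^^ i) f has_real_derivative (deriv ^^ Suc i) f x) (at x)"
  unfolding smooth_def by (simp add: DERIV_deriv_iff_real_differentiable)

lemma smoothI:
  "(\<And>i x. \<exists>D. ((deriv ^^ i) f has_real_derivative D) (at x)) \<Longrightarrow> smooth f"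
  unfolding smooth_def real_differentiable_def by blast

lemma higher_deriv_sum:
  assumes "finite A" "\<And>l. l \<in> A \<Longrightarrow> smooth (f l)"
  shows "(deriv ^^ i) (\<lambda>t. \<Sum>l\<in>A. c l * f l t) = (\<lambda>t. \<Sum>l\<in>A. c l * (deriv ^^ i) (f l) t)"
proof (induction i)
  case (Suc i)
  show ?case
  proof
    fix x
    have "((\<lambda>t. \<Sum>l\<in>A. c l * (deriv ^^ i) (f l) t) has_real_derivative
            (\<Sum>l\<in>A. c l * (deriv ^^ Suc i) (f l) x)) (at x)"
      by (intro DERIV_sum DERIV_cmult smooth_higher_deriv assms(2))
    then show "(deriv ^^ Suc i) (\<lambda>t. \<Sum>l\<in>A. c l * f l t) x = (\<Sum>l\<in>A. c l * (deriv ^^ Suc i) (f l) x)"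
      using Suc by (simp add: DERIV_imp_deriv)
  qed
qed simp

lemma higher_deriv_add_scaled:
  assumes "smooth f" "smooth g"
  shows "(deriv ^^ i) (\<lambda>t. f t + c * g t) = (\<lambda>t. (deriv ^^ i) f t + c * (deriv ^^ i) g t)"
proof (induction i)
  case (Suc i)
  show ?case
  proof
    fix x
    have "((\<lambda>t. (deriv ^^ i) f t + c * (deriv ^^ i) g t) has_real_derivative
            (deriv ^^ Suc i) f x + c * (deriv ^^ Suc i) g x) (at x)"
      by (intro DERIV_add DERIV_cmult smooth_higher_deriv assms)
    then show "(deriv ^^ Suc i) (\<lambda>t. f t + c * g t) x = (deriv ^^ Suc i) f x + c * (deriv ^^ Suc i) g x"
      using Suc by (simp add: DERIV_imp_deriv)
  qed
qed simp

lemma binomial_sum_step: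
  fixes a b :: "nat \<Rightarrow> real"
  shows "(\<Sum>i=0..n. real (n choose i) * (a (Suc i) * b (n-i) + a i * b (Suc (n-i)))) =
         (\<Sum>i=0..Suc n. real (Suc n choose i) * a i * b (Suc n - i))"
proof -
  have Suc_choose: "Suc n choose i = (n choose i) + (if i = 0 then 0 else n choose (i - 1))" for i
    by (cases i) simp_all
  have "(\<Sum>i=0..Suc n. real (Suc n choose i) * a i * b (Suc n - i)) =
        (\<Sum>i=0..Suc n. real (n choose i) * a i * b (Suc n - i)) +
        (\<Sum>i=0..Suc n. real (if i = 0 then 0 else n choose (i - 1)) * a i * b (Suc n - i))"
    by (simp add: Suc_choose sum.distrib algebra_simps)
  also have "(\<Sum>i=0..Suc n. real (n choose i) * a i * b (Suc n - i)) =
             (\<Sum>i=0..n. real (n choose i) * a i * b (Suc (n - i)))"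
    by (simp add: Suc_diff_le)
  also have "(\<Sum>i=0..Suc n. real (if i = 0 then 0 else n choose (i - 1)) * a i * b (Suc n - i)) =
             (\<Sum>i=0..n. real (n choose i) * a (Suc i) * b (n - i))"
    by (subst sum.atLeast0_atMost_Suc_shift) simp
  finally show ?thesis by (simp add: sum.distrib algebra_simps)
qed

lemma has_real_derivative_Leibniz_sum:
  assumes "smooth f" "smooth g"
  shows "((\<lambda>z. \<Sum>i=0..n. real (n choose i) * (deriv ^^ i) f z * (deriv ^^ (n-i)) g z) has_real_derivative
     (\<Sum>i=0..Suc n. real (Suc n choose i) * (deriv ^^ i) f z * (deriv ^^ (Suc n - i)) g z)) (at z)"
proof -
  have "((\<lambda>z. (deriv ^^ i) f z * (deriv ^^ j) g z) has_real_derivative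
          (deriv ^^ Suc i) f z * (deriv ^^ j) g z + (deriv ^^ i) f z * (deriv ^^ Suc j) g z) (at z)" for i j
    using DERIV_mult[OF smooth_higher_deriv[OF assms(1)] smooth_higher_deriv[OF assms(2)]]
    by (simp add: algebra_simps)
  then have "((\<lambda>z. \<Sum>i=0..n. real (n choose i) * ((deriv ^^ i) f z * (deriv ^^ (n-i)) g z)) has_real_derivative
     (\<Sum>i=0..n. real (n choose i) * ((deriv ^^ Suc i) f z * (deriv ^^ (n-i)) g z
                                     + (deriv ^^ i) f z * (deriv ^^ Suc (n-i)) g z))) (at z)"
    by (intro DERIV_sum DERIV_cmult)
  then show ?thesis
    using binomial_sum_step[of n "\<lambda>i. (deriv ^^ i) f z" "\<lambda>i. (deriv ^^ i) g z"]
    by (simp add: mult.assoc)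
qed

lemma higher_deriv_mult:
  assumes "smooth f" "smooth g"
  shows "(deriv ^^ n) (\<lambda>w. f w * g w) =
           (\<lambda>z. \<Sum>i=0..n. real (n choose i) * (deriv ^^ i) f z * (deriv ^^ (n-i)) g z)"
proof (induction n)
  case (Suc n)
  then show ?case
    using DERIV_imp_deriv[OF has_real_derivative_Leibniz_sum[OF assms]] by simp
qed simp

lemma smooth_mult:
  assumes "smooth f" "smooth g"
  shows "smooth (\<lambda>w. f w * g w)"
  by (rule smoothI) (use has_real_derivative_Leibniz_sum[OF assms] in \<open>auto simp: higher_deriv_mult[OF assms]\<close>)

lemma higher_deriv_sin_affine:
  "(deriv ^^ i) (\<lambda>t. sin (a * t + b)) = (\<lambda>t. a ^ i * sin (a * t + b + real i * pi / 2))"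
proof (induction i)
  case (Suc i)
  show ?case
  proof
    fix x
    have "((\<lambda>t. a ^ i * sin (a * t + b + real i * pi / 2)) has_real_derivative
           a ^ i * (cos (a * x + b + real i * pi / 2) * a)) (at x)"
      by (rule derivative_eq_intros refl | simp)+
    moreover have "cos (a * x + b + real i * pi / 2) = sin (a * x + b + real (Suc i) * pi / 2)"
    proof -
      have "a * x + b + real (Suc i) * pi / 2 = (a * x + b + real i * pi / 2) + pi / 2"
        by (simp add: algebra_simps)
      then show ?thesis by (simp only: sin_add sin_pi_half cos_pi_half)
    qed
    ultimately show "(deriv ^^ Suc i) (\<lambda>t. sin (a * t + b)) x = a ^ Suc i * sin (a * x + b + real (Suc i) * pi / 2)"
      using Suc by (simp add: DERIV_imp_deriv algebra_simps)
  qed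
qed simp

lemma smooth_sin_affine: "smooth (\<lambda>t. sin (a * t + b))"
proof (rule smoothI)
  fix i x
  have "((\<lambda>t. a ^ i * sin (a * t + b + real i * pi / 2)) has_real_derivative
         a ^ i * (cos (a * x + b + real i * pi / 2) * a)) (at x)"
    by (rule derivative_eq_intros refl | simp)+
  then show "\<exists>D. ((deriv ^^ i) (\<lambda>t. sin (a * t + b)) has_real_derivative D) (at x)"
    unfolding higher_deriv_sin_affine by blast
qed

lemma smooth_sin_mult: "smooth (\<lambda>t. sin (a * t))"
  using smooth_sin_affine[of a 0] by simp

lemma smooth_cos_mult: "smooth (\<lambda>t. cos (a * t))"
  using smooth_sin_affine[of a "pi/2"] by (simp add: sin_add)

lemma higher_deriv_const: "(deriv ^^ i) (\<lambda>_. c) = (\<lambda>_. if i = 0 then c else 0 :: real)"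
  by (induction i) (auto simp: deriv_const)

lemma smooth_const: "smooth (\<lambda>_. c)"
  by (rule smoothI) (auto simp: higher_deriv_const intro!: exI[of _ 0])

lemma smooth_cos_power: "smooth (\<lambda>t. cos t ^ p)"
  by (induction p) (use smooth_const smooth_mult[OF smooth_cos_mult[of 1]] in auto)

lemma smooth_sin_cos_power: "smooth (\<lambda>t. sin t * cos t ^ p)"
  using smooth_mult[OF smooth_sin_mult[of 1] smooth_cos_power] by simp

section \<open>Wronskians\<close>

definition wronskian_mat :: "(real \<Rightarrow> real) list \<Rightarrow> real \<Rightarrow> real mat" where
  "wronskian_mat fs x = mat (length fs) (length fs) (\<lambda>(i, j). (deriv ^^ i) (fs ! j) x)"

lemma Wr_def_wronskian_mat: "Wr fs x = det (wronskian_mat fs x)"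
  unfolding Wr_def wronskian_mat_def ..

lemma wronskian_mat_carrier: "wronskian_mat fs x \<in> carrier_mat (length fs) (length fs)"
  unfolding wronskian_mat_def by simp

lemma wronskian_mat_index:
  "i < length fs \<Longrightarrow> j < length fs \<Longrightarrow> wronskian_mat fs x $$ (i, j) = (deriv ^^ i) (fs ! j) x"
  unfolding wronskian_mat_def by simp

lemma Wr_singleton: "Wr [f] x = f x"
  unfolding Wr_def by (simp add: det_single)

lemma Wr_lincomb:
  assumes "length fs = n" "length gs = n" "T \<in> carrier_mat n n" "\<forall>f\<in>set fs. smooth f"
    and "\<And>j. j < n \<Longrightarrow> gs ! j = (\<lambda>t. \<Sum>l<n. T $$ (l, j) * (fs ! l) t)"
  shows "Wr gs x = Wr fs x * det T"
proof -
  have "wronskian_mat gs x = wronskian_mat fs x * T"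
  proof (rule eq_matI)
    fix i j assume "i < dim_row (wronskian_mat fs x * T)" "j < dim_col (wronskian_mat fs x * T)"
    then have i: "i < n" and j: "j < n" using assms wronskian_mat_carrier[of fs x] by auto
    have "wronskian_mat gs x $$ (i, j) = (deriv ^^ i) (\<lambda>t. \<Sum>l<n. T $$ (l, j) * (fs ! l) t) x"
      using i j assms by (simp add: wronskian_mat_index)
    also have "\<dots> = (\<Sum>l<n. T $$ (l, j) * (deriv ^^ i) (fs ! l) x)"
      using higher_deriv_sum[of "{..<n}" "(!) fs"] assms(1,4) by simp
    also have "\<dots> = (wronskian_mat fs x * T) $$ (i, j)"
      using i j assms wronskian_mat_carrier[of fs x]
      by (auto simp: scalar_prod_def wronskian_mat_index lessThan_atLeast0 mult.commute intro!: sum.cong)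
    finally show "wronskian_mat gs x $$ (i, j) = (wronskian_mat fs x * T) $$ (i, j)" .
  qed (use assms in \<open>auto simp: wronskian_mat_def\<close>)
  then show ?thesis
    using det_mult[OF wronskian_mat_carrier[of fs x], of T] assms by (simp add: Wr_def_wronskian_mat)
qed

lemma Wr_triangular_lincomb:
  assumes "length gs = length fs" "\<forall>f\<in>set fs. smooth f"
    and "\<And>j. j < length fs \<Longrightarrow> gs ! j = (\<lambda>t. \<Sum>l\<le>j. c l j * (fs ! l) t)"
  shows "Wr gs x = (\<Prod>j<length fs. c j j) * Wr fs x"
proof -
  define n where "n = length fs"
  define T where "T = mat n n (\<lambda>(l, j). if l \<le> j then c l j else 0)"
  have T: "T \<in> carrier_mat n n" unfolding T_def by simp
  have "Wr gs x = Wr fs x * det T"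
  proof (rule Wr_lincomb[OF _ _ T assms(2)])
    fix j assume j: "j < n"
    have "(\<Sum>l<n. T $$ (l, j) * (fs ! l) t) = (\<Sum>l\<le>j. T $$ (l, j) * (fs ! l) t)" for t
      by (rule sum.mono_neutral_right) (use j in \<open>auto simp: T_def\<close>)
    also have "(\<Sum>l\<le>j. T $$ (l, j) * (fs ! l) t) = (\<Sum>l\<le>j. c l j * (fs ! l) t)" for t
      using j by (auto simp: T_def intro: sum.cong)
    finally show "gs ! j = (\<lambda>t. \<Sum>l<n. T $$ (l, j) * (fs ! l) t)"
      using assms(3) j by (simp add: n_def)
  qed (use assms n_def in auto)
  moreover have "det T = (\<Prod>j<n. c j j)"
  proof -
    have "det T = prod_list (diag_mat T)"
      by (rule det_upper_triangular[OF _ T]) (auto simp: T_def)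
    then show ?thesis by (simp add: prod_list_diag_prod T_def lessThan_atLeast0)
  qed
  ultimately show ?thesis by (simp add: n_def)
qed

lemma Wr_scale:
  assumes "length cs = length fs" "\<forall>f\<in>set fs. smooth f"
  shows "Wr (map2 (\<lambda>c f t. c * f t) cs fs) x = prod_list cs * Wr fs x"
proof -
  have "prod_list cs = (\<Prod>j<length cs. cs ! j)"
    by (metis atLeast0LessThan distinct_upt map_nth prod.distinct_set_conv_list set_upt)
  moreover have "map2 (\<lambda>c f t. c * f t) cs fs ! j = (\<lambda>t. \<Sum>l\<le>j. (if l = j then cs ! j else 0) * (fs ! l) t)"
    if "j < length fs" for j
  proof -
    have "(\<Sum>l\<le>j. (if l = j then cs ! j else 0) * (fs ! l) t) = (\<Sum>l\<le>j. if l = j then cs ! j * (fs ! l) t else 0)" for t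
      by (rule sum.cong) auto
    then show ?thesis using that assms(1) by auto
  qed
  then have "Wr (map2 (\<lambda>c f t. c * f t) cs fs) x = (\<Prod>j<length fs. cs ! j) * Wr fs x"
    using Wr_triangular_lincomb[of "map2 (\<lambda>c f t. c * f t) cs fs" fs "\<lambda>l j. if l = j then cs ! j else 0"] assms
    by simp
  ultimately show ?thesis using assms(1) by simp
qed

lemma Wr_map_mult:
  assumes "smooth f" "\<forall>g\<in>set gs. smooth g"
  shows "Wr (map (\<lambda>g t. f t * g t) gs) x = f x ^ length gs * Wr gs x"
proof -
  define n where "n = length gs"
  define L where "L = mat n n (\<lambda>(i, l). if l \<le> i then real (i choose l) * (deriv ^^ (i - l)) f x else 0)"
  have L: "L \<in> carrier_mat n n" unfolding L_def by simp
  have "wronskian_mat (map (\<lambda>g t. f t * g t) gs) x = L * wronskian_mat gs x"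
  proof (rule eq_matI)
    fix i j assume "i < dim_row (L * wronskian_mat gs x)" "j < dim_col (L * wronskian_mat gs x)"
    then have i: "i < n" and j: "j < n" using L wronskian_mat_carrier[of gs x] n_def by auto
    have "wronskian_mat (map (\<lambda>g t. f t * g t) gs) x $$ (i, j) = (deriv ^^ i) (\<lambda>t. (gs ! j) t * f t) x"
      using i j n_def by (simp add: wronskian_mat_index mult.commute)
    also have "\<dots> = (\<Sum>l=0..i. real (i choose l) * (deriv ^^ l) (gs ! j) x * (deriv ^^ (i - l)) f x)"
      using higher_deriv_mult[OF _ assms(1), of "gs ! j"] assms(2) j n_def by simp
    also have "\<dots> = (\<Sum>l\<in>{0..<n}. L $$ (i, l) * (deriv ^^ l) (gs ! j) x)"
    proof -
      have "(\<Sum>l\<in>{0..<n}. L $$ (i, l) * (deriv ^^ l) (gs ! j) x) = (\<Sum>l=0..i. L $$ (i, l) * (deriv ^^ l) (gs ! j) x)"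
        by (rule sum.mono_neutral_right) (use i in \<open>auto simp: L_def\<close>)
      then show ?thesis
        using i by (auto simp: L_def mult_ac intro: sum.cong)
    qed
    also have "\<dots> = (L * wronskian_mat gs x) $$ (i, j)"
      using i j L wronskian_mat_carrier[of gs x] n_def
      by (auto simp: scalar_prod_def wronskian_mat_index intro!: sum.cong)
    finally show "wronskian_mat (map (\<lambda>g t. f t * g t) gs) x $$ (i, j) = (L * wronskian_mat gs x) $$ (i, j)" .
  qed (use L n_def in \<open>auto simp: wronskian_mat_def\<close>)
  moreover have "det L = f x ^ n"
  proof -
    have "det L = prod_list (diag_mat L)"
      by (rule det_lower_triangular[OF _ L]) (auto simp: L_def)
    also have "diag_mat L = replicate n (f x)"
      by (rule nth_equalityI) (auto simp: diag_mat_def L_def)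
    finally show ?thesis by simp
  qed
  ultimately show ?thesis
    using det_mult[OF L wronskian_mat_carrier[of gs x, folded n_def]]
    by (simp add: Wr_def_wronskian_mat n_def)
qed

lemma Wr_Cons_one: "Wr ((\<lambda>_. 1) # gs) x = Wr (map deriv gs) x"
proof -
  define A where "A = wronskian_mat ((\<lambda>_. 1) # gs) x"
  define m where "m = length gs"
  have A: "A \<in> carrier_mat (Suc m) (Suc m)"
    unfolding A_def m_def using wronskian_mat_carrier[of "(\<lambda>_. 1) # gs" x] by simp
  have "det A = (\<Sum>i<Suc m. A $$ (i, 0) * cofactor A i 0)"
    by (rule laplace_expansion_column[OF A]) simp
  also have "\<dots> = (\<Sum>i<Suc m. if i = 0 then cofactor A i 0 else 0)"
    by (rule sum.cong) (auto simp: A_def wronskian_mat_index m_def higher_deriv_const)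
  also have "\<dots> = det (mat_delete A 0 0)"
    by (simp add: cofactor_def)
  also have "mat_delete A 0 0 = wronskian_mat (map deriv gs) x"
    by (rule eq_matI)
      (auto simp: mat_delete_def A_def wronskian_mat_def m_def funpow_Suc_right simp del: funpow.simps)
  finally show ?thesis by (simp add: Wr_def_wronskian_mat A_def)
qed

lemma Wr_append_add_scaled:
  assumes "smooth g" "smooth h"
  shows "Wr (fs @ [\<lambda>t. g t + c * h t]) x = Wr (fs @ [g]) x + c * Wr (fs @ [h]) x"
proof -
  define n where "n = length fs"
  define A where "A = (\<lambda>f. wronskian_mat (fs @ [f]) x)"
  have A: "A f \<in> carrier_mat (Suc n) (Suc n)" for f
    unfolding A_def n_def by (metis wronskian_mat_carrier length_append_singleton)
  have minor: "mat_delete (A f) i n = mat_delete (A f') i n" for f f' i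
    by (rule eq_matI) (auto simp: mat_delete_def A_def wronskian_mat_def n_def nth_append)
  have expand: "det (A f) = (\<Sum>i<Suc n. (deriv ^^ i) f x * cofactor (A g) i n)" for f
  proof -
    have "det (A f) = (\<Sum>i<Suc n. A f $$ (i, n) * cofactor (A f) i n)"
      by (rule laplace_expansion_column[OF A]) simp
    also have "\<dots> = (\<Sum>i<Suc n. (deriv ^^ i) f x * cofactor (A g) i n)"
      unfolding cofactor_def minor[where f = f and f' = g]
      by (intro sum.cong) (auto simp: A_def wronskian_mat_index n_def nth_append)
    finally show ?thesis .
  qed
  have "det (A (\<lambda>t. g t + c * h t)) = det (A g) + c * det (A h)"
    unfolding expand higher_deriv_add_scaled[OF assms]
    by (simp add: algebra_simps sum.distrib sum_distrib_left)
  then show ?thesis by (simp add: Wr_def_wronskian_mat A_def)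
qed

section \<open>Wronskians of sines\<close>

fun chebyshev_U :: "nat \<Rightarrow> real poly" where
  "chebyshev_U 0 = 1"
| "chebyshev_U (Suc 0) = [:0, 2:]"
| "chebyshev_U (Suc (Suc j)) = pCons 0 (smult 2 (chebyshev_U (Suc j))) - chebyshev_U j"

lemma sin_Suc_mult_chebyshev_U: "sin (real (Suc j) * t) = sin t * poly (chebyshev_U j) (cos t)"
proof (induction j rule: chebyshev_U.induct)
  case 2
  then show ?case by (simp add: sin_double)
next
  case (3 j)
  have "sin (real (Suc (Suc (Suc j))) * t) = 2 * cos t * sin (real (Suc (Suc j)) * t) - sin (real (Suc j) * t)"
    using sin_add[of "real (Suc (Suc j)) * t" t] sin_diff[of "real (Suc (Suc j)) * t" t]
    by (simp add: algebra_simps)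
  then show ?case using 3 by (simp add: algebra_simps)
qed simp

lemma coeff_chebyshev_U_eq_0: "j < l \<Longrightarrow> coeff (chebyshev_U j) l = 0"
proof (induction j arbitrary: l rule: chebyshev_U.induct)
  case (3 j)
  then show ?case by (cases l) auto
qed (auto simp: coeff_pCons split: nat.split)

lemma lead_coeff_chebyshev_U: "coeff (chebyshev_U j) j = 2 ^ j"
  by (induction j rule: chebyshev_U.induct) (auto simp: coeff_chebyshev_U_eq_0)

lemma sin_Suc_mult_expansion:
  "sin (real (Suc j) * t) = (\<Sum>l\<le>j. coeff (chebyshev_U j) l * (sin t * cos t ^ l))"
proof -
  have "degree (chebyshev_U j) \<le> j"
    by (rule degree_le) (simp add: coeff_chebyshev_U_eq_0)
  then have "poly (chebyshev_U j) (cos t) = (\<Sum>l\<le>j. coeff (chebyshev_U j) l * cos t ^ l)"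
    unfolding poly_altdef by (intro sum.mono_neutral_left) (auto simp: coeff_eq_0)
  then show ?thesis
    unfolding sin_Suc_mult_chebyshev_U by (simp add: sum_distrib_left mult_ac)
qed

lemma Wr_sin_multiples_append:
  assumes "smooth h"
  shows "Wr (map (\<lambda>j t. sin (real (Suc j) * t)) [0..<N] @ [h]) x
       = (\<Prod>j<N. 2 ^ j) * Wr (map (\<lambda>p t. sin t * cos t ^ p) [0..<N] @ [h]) x"
proof -
  define fs where "fs = map (\<lambda>p t. sin t * cos t ^ p) [0..<N] @ [h]"
  define c where "c l j = (if j < N then coeff (chebyshev_U j) l else if l = j then 1 else 0)" for l j
  have "Wr (map (\<lambda>j t. sin (real (Suc j) * t)) [0..<N] @ [h]) x = (\<Prod>j<length fs. c j j) * Wr fs x"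
  proof (rule Wr_triangular_lincomb[where c = c])
    show "\<forall>f\<in>set fs. smooth f"
      using assms smooth_sin_cos_power by (auto simp: fs_def)
    fix j assume j: "j < length fs"
    show "(map (\<lambda>j t. sin (real (Suc j) * t)) [0..<N] @ [h]) ! j = (\<lambda>t. \<Sum>l\<le>j. c l j * (fs ! l) t)"
    proof (cases "j < N")
      case True
      then have "(map (\<lambda>j t. sin (real (Suc j) * t)) [0..<N] @ [h]) ! j = (\<lambda>t. sin (real (Suc j) * t))"
        by (simp add: nth_append)
      with True show ?thesis
        unfolding sin_Suc_mult_expansion by (auto simp: fs_def nth_append c_def intro!: sum.cong)
    next
      case False
      then have "j = N" using j by (simp add: fs_def)
      moreover have "(\<Sum>l\<le>N. c l N * (fs ! l) t) = (\<Sum>l\<le>N. if l = N then h t else 0)" for t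
        by (rule sum.cong) (auto simp: c_def fs_def nth_append)
      ultimately show ?thesis by (simp add: nth_append)
    qed
  qed (simp add: fs_def)
  then show ?thesis
    by (simp add: fs_def c_def lead_coeff_chebyshev_U)
qed

lemma deriv_cos_power_Suc: "deriv (\<lambda>t. cos t ^ Suc p) = (\<lambda>t. - real (Suc p) * (sin t * cos t ^ p))"
proof
  fix t
  have "((\<lambda>t. cos t ^ Suc p) has_real_derivative real (Suc p) * cos t ^ p * - sin t) (at t)"
    by (rule derivative_eq_intros refl | simp)+
  then show "deriv (\<lambda>t. cos t ^ Suc p) t = - real (Suc p) * (sin t * cos t ^ p)"
    by (simp add: DERIV_imp_deriv algebra_simps)
qed

lemma deriv_cos_mult:
  fixes a :: real
  shows "deriv (\<lambda>t. cos (a * t)) = (\<lambda>t. - a * sin (a * t))"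
proof
  fix t
  have "((\<lambda>t. cos (a * t)) has_real_derivative - sin (a * t) * a) (at t)"
    by (rule derivative_eq_intros refl | simp)+
  then show "deriv (\<lambda>t. cos (a * t)) t = - a * sin (a * t)"
    by (simp add: DERIV_imp_deriv algebra_simps)
qed

lemma prod_list_minus_Suc: "prod_list (map (\<lambda>p. - real (Suc p)) [0..<M]) = (-1) ^ M * fact M"
  by (induction M) (simp_all add: algebra_simps)

lemma Wr_cos_powers:
  "Wr (map (\<lambda>p t. cos t ^ p) [0..<Suc M] @ [\<lambda>t. cos (a * t)]) x
     = (-1) ^ Suc M * fact M * a * Wr (map (\<lambda>p t. sin t * cos t ^ p) [0..<M] @ [\<lambda>t. sin (a * t)]) x"
proof -
  define cs where "cs = map (\<lambda>p. - real (Suc p)) [0..<M] @ [- a]"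
  define fs where "fs = map (\<lambda>p t. sin t * cos t ^ p) [0..<M] @ [\<lambda>t. sin (a * t)]"
  have cos_powers: "map (\<lambda>p t. cos t ^ p) [0..<Suc M] = (\<lambda>_. 1) # map (\<lambda>p t. cos t ^ Suc p) [0..<M]"
    by (simp add: map_upt_Suc del: upt_Suc)
  have "Wr (map (\<lambda>p t. cos t ^ p) [0..<Suc M] @ [\<lambda>t. cos (a * t)]) x
      = Wr (map deriv (map (\<lambda>p t. cos t ^ Suc p) [0..<M] @ [\<lambda>t. cos (a * t)])) x"
    unfolding cos_powers append_Cons by (rule Wr_Cons_one)
  also have "map deriv (map (\<lambda>p t. cos t ^ Suc p) [0..<M] @ [\<lambda>t. cos (a * t)])
      = map2 (\<lambda>c f t. c * f t) cs fs"
    by (rule nth_equalityI)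
      (auto simp: cs_def fs_def nth_append deriv_cos_power_Suc deriv_cos_mult less_Suc_eq simp del: power_Suc)
  also have "Wr (map2 (\<lambda>c f t. c * f t) cs fs) x = prod_list cs * Wr fs x"
    by (rule Wr_scale) (auto simp: cs_def fs_def smooth_sin_cos_power smooth_sin_mult)
  finally show ?thesis
    unfolding cs_def fs_def prod_list.append prod_list_minus_Suc by simp
qed

lemma W_eq_Wr_sin_multiples:
  assumes "n \<ge> 1"
  shows "W n k x = Wr (map (\<lambda>j t. sin (real (Suc j) * t)) [0..<n - 1] @ [\<lambda>t. sin (real (n + k) * t)]) x"
proof (cases "n = 1")
  case True
  then show ?thesis by (simp add: W_def Wr_singleton add.commute)
next
  case False
  then have "[1..<n] = map Suc [0..<n - 1]"
    using assms by (simp add: map_Suc_upt)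
  with False show ?thesis by (simp add: W_def comp_def)
qed

lemma Wr_sin_multiples_append_sin_cos:
  fixes a :: real
  shows "Wr (map (\<lambda>j t. sin (real (Suc j) * t)) [0..<Suc M] @ [\<lambda>t. sin t * cos (a * t)]) x
       = - ((-2) ^ M * fact M * a * sin x ^ Suc (Suc M))
         * Wr (map (\<lambda>j t. sin (real (Suc j) * t)) [0..<M] @ [\<lambda>t. sin (a * t)]) x"
proof -
  define C where "C = map (\<lambda>p t. cos t ^ p) [0..<Suc M] @ [\<lambda>t. cos (a * t)]"
  define X where "X = Wr (map (\<lambda>p t. sin t * cos t ^ p) [0..<M] @ [\<lambda>t. sin (a * t)]) x"
  have "smooth (\<lambda>t. sin t * cos (a * t))"
    using smooth_mult[OF smooth_sin_mult[of 1] smooth_cos_mult] by simp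
  then have "Wr (map (\<lambda>j t. sin (real (Suc j) * t)) [0..<Suc M] @ [\<lambda>t. sin t * cos (a * t)]) x
      = (\<Prod>j<Suc M. 2 ^ j) * Wr (map (\<lambda>p t. sin t * cos t ^ p) [0..<Suc M] @ [\<lambda>t. sin t * cos (a * t)]) x"
    by (rule Wr_sin_multiples_append)
  also have "map (\<lambda>p t. sin t * cos t ^ p) [0..<Suc M] @ [\<lambda>t. sin t * cos (a * t)] = map (\<lambda>g t. sin t * g t) C"
    by (simp add: C_def del: upt_Suc)
  also have "Wr (map (\<lambda>g t. sin t * g t) C) x = sin x ^ Suc (Suc M) * Wr C x"
    using Wr_map_mult[OF smooth_sin_mult[of 1], of C] smooth_cos_power smooth_cos_mult
    by (simp add: C_def)
  also have "Wr C x = (-1) ^ Suc M * fact M * a * X"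
    unfolding C_def X_def by (rule Wr_cos_powers)
  also have "X = Wr (map (\<lambda>j t. sin (real (Suc j) * t)) [0..<M] @ [\<lambda>t. sin (a * t)]) x / (\<Prod>j<M. 2 ^ j)"
    unfolding X_def Wr_sin_multiples_append[OF smooth_sin_mult] by simp
  finally show ?thesis
    by (simp add: power_minus[of 2] algebra_simps)
qed

theorem lemma2:
  fixes n k :: nat and x :: real
  assumes "n \<ge> 2"
  shows "W n (k + 2) x = W n k x + (-2) ^ (n - 1) * real (n + k + 1) * fact (n - 2) * (sin x) ^ n * W (n - 1) (k + 2) x"
proof -
  obtain M where n: "n = Suc (Suc M)" using assms by (metis add_2_eq_Suc le_Suc_ex)
  define m where "m = real (n + k + 1)"
  define S where "S N (h :: real \<Rightarrow> real) = map (\<lambda>j t. sin (real (Suc j) * t)) [0..<N] @ [h]" for N h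
  have W_S: "W n j x = Wr (S (Suc M) (\<lambda>t. sin (real (n + j) * t))) x" for j
    using W_eq_Wr_sin_multiples[of n j x] by (simp add: S_def n)
  have sin_sum: "(\<lambda>t. sin (real (n + (k + 2)) * t)) = (\<lambda>t. sin (real (n + k) * t) + 2 * (sin t * cos (m * t)))"
  proof
    fix t
    have "real (n + (k + 2)) * t = m * t + t" "real (n + k) * t = m * t - t"
      by (simp_all add: m_def algebra_simps)
    then show "sin (real (n + (k + 2)) * t) = sin (real (n + k) * t) + 2 * (sin t * cos (m * t))"
      by (simp add: sin_add sin_diff)
  qed
  have "W n (k + 2) x = W n k x + 2 * Wr (S (Suc M) (\<lambda>t. sin t * cos (m * t))) x"
    unfolding W_S sin_sum S_def
    by (intro Wr_append_add_scaled smooth_sin_mult smooth_mult[OF smooth_sin_mult[of 1], simplified] smooth_cos_mult)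
  also have "Wr (S (Suc M) (\<lambda>t. sin t * cos (m * t))) x
      = - ((-2) ^ M * fact M * m * sin x ^ n) * Wr (S M (\<lambda>t. sin (m * t))) x"
    unfolding S_def n by (rule Wr_sin_multiples_append_sin_cos)
  also have "Wr (S M (\<lambda>t. sin (m * t))) x = W (n - 1) (k + 2) x"
    using W_eq_Wr_sin_multiples[of "n - 1" "k + 2" x] by (simp add: S_def n m_def algebra_simps)
  finally show ?thesis
    by (simp add: n m_def algebra_simps)
qed

end
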